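(* Consider the caching network and the backhaul-eavesdropper scenario $S_1$ described in the context, and assume every user is served by exactly one SBS, i.e., $\gamma_1=1$. For a placement $\mathbf{m}=(m_1,\dots,m_N)$ of integers $0\le m_j\le n$, if $m_j > n\left(1-\frac{1}{Q p_j}\right)$ for every $j=1,\dots,N$, then the network is secure in scenario $S_1$.
   Context: A macro base station (MBS) has access to a library of $N$ files $F_1,\dots,F_N$; file $F_j$ is requested with probability $p_j>0$, $\sum_j p_j=1$. There are $N_{\text{SBS}}$ small-cell base stations (SBSs), each with a cache. Each file is split into $n$ fragments and encoded with a code such that any $n$ distinct encoded packets of a file suffice to recover it, while fewer than $n$ distinct packets do not allow recovery of the file. A placement $\mathbf{m}$ means each SBS stores $m_j$ encoded packets of $F_j$, with packets stored at different SBSs all distinct. A user is served by exactly $d$ SBSs with probability $\gamma_d$, $d=1,\dots,S$ ($\gamma_d\ge0$, $\sum_d\gamma_d=1$, $S$ the maximum number of SBSs serving a user). A user requesting $F_j$ and served by $d$ SBSs receives $d m_j$ distinct packets from them, and the MBS sends the missing $n(1-\min(1,d m_j/n))$ new distinct packets over the backhaul. Scenario $S_1$: each SBS receives $Q$ requests during delivery, $Q p_j$ of them for $F_j$; an eavesdropper intercepts all packets sent over one MBS-to-SBS link, collecting $P_j=\sum_{d=1}^{S} Q\gamma_d p_j\, n(1-\min(1,d m_j/n))$ distinct packets of $F_j$. The network is secure in scenario $S_1$ if $P_j<n$ for all $j$. *)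

theory Defs
  imports Complex_Main
begin

text \<open>Number of distinct packets of file j collected by an eavesdropper on one
MBS-to-SBS link in scenario S1:
  P_j = sum_{d=1}^S Q gamma_d p_j n (1 - min(1, d m_j / n)).\<close>
definition eaves_packets ::
  "nat \<Rightarrow> (nat \<Rightarrow> real) \<Rightarrow> nat \<Rightarrow> (nat \<Rightarrow> real) \<Rightarrow> nat \<Rightarrow> (nat \<Rightarrow> nat) \<Rightarrow> nat \<Rightarrow> real" where
  "eaves_packets S \<gamma> Q p n m j =
     (\<Sum>d=1..S. real Q * \<gamma> d * p j * real n * (1 - min 1 (real d * real (m j) / real n)))"

definition secure_S1 ::
  "nat \<Rightarrow> nat \<Rightarrow> (nat \<Rightarrow> real) \<Rightarrow> nat \<Rightarrow> (nat \<Rightarrow> real) \<Rightarrow> nat \<Rightarrow> (nat \<Rightarrow> nat) \<Rightarrow> bool" where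
  "secure_S1 N S \<gamma> Q p n m \<longleftrightarrow> (\<forall>j\<in>{1..N}. eaves_packets S \<gamma> Q p n m j < real n)"

end

theory Submission
  imports Defs
begin

text \<open>With \<open>\<gamma>\<^sub>1 = 1\<close> only the \<open>d = 1\<close> term of the eavesdropper's count survives, so
  \<open>P\<^sub>j = Q p\<^sub>j (n - m\<^sub>j)\<close>; the hypothesis on \<open>m\<^sub>j\<close> is exactly \<open>n - m\<^sub>j < n / (Q p\<^sub>j)\<close>.\<close>

lemma distribution_concentrated_at_first:
  fixes \<gamma> :: "nat \<Rightarrow> real"
  assumes "\<forall>d\<in>{1..S}. \<gamma> d \<ge> 0" and "(\<Sum>d=1..S. \<gamma> d) = 1" and "\<gamma> 1 = 1" and "S \<ge> 1"
  shows "\<forall>d\<in>{2..S}. \<gamma> d = 0"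
proof -
  have "(\<Sum>d=1..S. \<gamma> d) = \<gamma> 1 + (\<Sum>d=2..S. \<gamma> d)"
    using \<open>S \<ge> 1\<close> by (simp add: sum.atLeast_Suc_atMost numeral_2_eq_2)
  then have "(\<Sum>d=2..S. \<gamma> d) = 0"
    using assms(2,3) by simp
  then show ?thesis
    using assms(1) sum_nonneg_eq_0_iff[of "{2..S}" \<gamma>] by auto
qed

lemma eaves_packets_single_serving:
  assumes "\<forall>d\<in>{2..S}. \<gamma> d = 0" and "\<gamma> 1 = 1" and "S \<ge> 1"
    and "n \<ge> 1" and "m j \<le> n"
  shows "eaves_packets S \<gamma> Q p n m j = real Q * p j * (real n - real (m j))"
proof -
  let ?f = "\<lambda>d. real Q * \<gamma> d * p j * real n * (1 - min 1 (real d * real (m j) / real n))"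
  have "eaves_packets S \<gamma> Q p n m j = ?f 1 + (\<Sum>d=2..S. ?f d)"
    unfolding eaves_packets_def using \<open>S \<ge> 1\<close>
    by (simp add: sum.atLeast_Suc_atMost numeral_2_eq_2)
  also have "(\<Sum>d=2..S. ?f d) = 0"
    using assms(1) by simp
  also have "min 1 (real (m j) / real n) = real (m j) / real n"
    using assms(4,5) by simp
  then have "?f 1 = real Q * p j * (real n - real (m j))"
    using assms(2,4) by (simp add: field_simps)
  finally show ?thesis by simp
qed

lemma scaled_deficit_less:
  fixes n m q :: real
  assumes "q > 0" and "m > n * (1 - 1 / q)"
  shows "q * (n - m) < n"
proof -
  have "n - m < n / q"
    using assms(2) by (simp add: right_diff_distrib)
  then show ?thesis
    using \<open>q > 0\<close> by (simp add: pos_less_divide_eq mult.commute)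
qed

theorem corollary1:
  fixes N S Q n :: nat and p \<gamma> :: "nat \<Rightarrow> real" and m :: "nat \<Rightarrow> nat"
  assumes n_pos: "n \<ge> 1"
    and p_pos: "\<forall>j\<in>{1..N}. p j > 0"
    and p_sum: "(\<Sum>j=1..N. p j) = 1"
    and S_pos: "S \<ge> 1"
    and gamma_nonneg: "\<forall>d\<in>{1..S}. \<gamma> d \<ge> 0"
    and gamma_sum: "(\<Sum>d=1..S. \<gamma> d) = 1"
    and gamma1: "\<gamma> 1 = 1"
    and m_le: "\<forall>j\<in>{1..N}. m j \<le> n"
    and m_big: "\<forall>j\<in>{1..N}. real (m j) > real n * (1 - 1 / (real Q * p j))"
  shows "secure_S1 N S \<gamma> Q p n m"
  unfolding secure_S1_def
proof
  fix j assume j: "j \<in> {1..N}"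
  have gamma_rest: "\<forall>d\<in>{2..S}. \<gamma> d = 0"
    using distribution_concentrated_at_first gamma_nonneg gamma_sum gamma1 S_pos by blast
  have packets: "eaves_packets S \<gamma> Q p n m j = real Q * p j * (real n - real (m j))"
    using eaves_packets_single_serving gamma_rest gamma1 S_pos n_pos m_le j by blast
  show "eaves_packets S \<gamma> Q p n m j < real n"
  proof (cases "Q = 0")
    case True
    then show ?thesis using packets n_pos by simp
  next
    case False
    then have "real Q * p j > 0" using p_pos j by simp
    then show ?thesis
      using packets scaled_deficit_less m_big j by simp
  qed
qed

end
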